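(* Let $\eta_1,\dots,\eta_r\in\mathbb{R}$ be pairwise distinct, let $q_1,\dots,q_r$ be real nonzero polynomials with $\deg q_j=\sigma_j-1$, and let $\gamma=\sigma_1+\dots+\sigma_r$. Let $h:\mathbb{R}\to\mathbb{R}$ be a function with $h\in C^{\gamma-2}(\mathbb{R})$, $h^{(\gamma-2)}$ absolutely continuous, $h(x+1)=-h(x)$ for all $x\in\mathbb{R}$, and $$h(x)=\sum_{j=1}^r q_j(x)e^{\eta_j x},\qquad x\in[0,1).$$ Then there exists $x_0\in\mathbb{R}$ such that $h$ is monotone on each interval $[x_0+k,x_0+k+1)$, $k\in\mathbb{Z}$. *)

theory Defs
  imports "HOL-Analysis.Analysis" "HOL-Computational_Algebra.Polynomial"
begin

definition abs_continuous_on :: "real set \<Rightarrow> (real \<Rightarrow> real) \<Rightarrow> bool" where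
  "abs_continuous_on S f \<longleftrightarrow>
     (\<forall>\<epsilon>>0. \<exists>\<delta>>0. \<forall>(n::nat) (a::nat \<Rightarrow> real) (b::nat \<Rightarrow> real).
        (\<forall>i<n. a i \<le> b i \<and> {a i..b i} \<subseteq> S) \<and>
        (\<forall>i<n. \<forall>j<n. i \<noteq> j \<longrightarrow> b i \<le> a j \<or> b j \<le> a i) \<and>
        (\<Sum>i<n. b i - a i) < \<delta>
        \<longrightarrow> (\<Sum>i<n. \<bar>f (b i) - f (a i)\<bar>) < \<epsilon>)"

definition abs_continuous_real :: "(real \<Rightarrow> real) \<Rightarrow> bool" where
  "abs_continuous_real f \<longleftrightarrow> (\<forall>a b. abs_continuous_on {a..b} f)"

definition C_k :: "nat \<Rightarrow> (real \<Rightarrow> real) \<Rightarrow> bool" where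
  "C_k m f \<longleftrightarrow> (\<forall>k<m. \<forall>x. (deriv ^^ k) f differentiable (at x)) \<and>
                 continuous_on UNIV ((deriv ^^ m) f)"

end

theory Submission
  imports Defs
begin

text \<open>On \<open>[0, 1)\<close> the function \<open>h\<close> coincides with an exponential polynomial \<open>f\<close>, which is
  annihilated by \<open>L = \<Prod>\<^sub>j (D - \<eta>\<^sub>j)\<^bsup>\<sigma>\<^sub>j\<^esup>\<close>, an operator of order \<open>\<gamma>\<close>; smoothness and antiperiodicity
  of \<open>h\<close> force the derivatives of \<open>f\<close> of order at most \<open>\<gamma> - 2\<close> to take opposite values at
  \<open>0\<close> and \<open>1\<close>. If \<open>f'\<close> changed sign twice on \<open>[0, 1]\<close>, the sign flip at the ends would give it
  three zeros in \<open>[0, 1)\<close>. A factor \<open>D - \<lambda>\<close> preserves three zeros in \<open>[0, 1)\<close> as long as two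
  boundary conditions are left: Rolle's theorem for \<open>e\<^sup>-\<^sup>\<lambda>\<^sup>x g(x)\<close> gives two zeros between the
  old ones, and the boundary conditions supply a third one near the ends. The last three factors
  then annihilate a function with three zeros, so it vanishes, and the boundary conditions
  propagate this back to \<open>f' = 0\<close>. Hence \<open>f'\<close> changes sign at most once, \<open>f\<close> is unimodal on
  \<open>[0, 1]\<close>, and antiperiodicity makes \<open>h\<close> monotone on some \<open>[t, t + 1)\<close> and its integer
  translates.\<close>

section \<open>Smooth functions and the operators \<open>D - \<lambda>\<close>\<close>

definition smooth :: "(real \<Rightarrow> real) \<Rightarrow> bool" where
  "smooth g \<longleftrightarrow> (\<forall>k x. (deriv ^^ k) g differentiable (at x))"

lemma smooth_higher_deriv: "smooth g \<Longrightarrow> smooth ((deriv ^^ m) g)"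
  unfolding smooth_def by (metis comp_apply funpow_add)

lemma smooth_deriv: "smooth g \<Longrightarrow> smooth (deriv g)"
  using smooth_higher_deriv[of g 1] by simp

lemma smooth_differentiable: "smooth g \<Longrightarrow> g differentiable (at x)"
  unfolding smooth_def by (metis funpow_0)

lemma smooth_DERIV: "smooth g \<Longrightarrow> (g has_real_derivative deriv g x) (at x)"
  by (simp add: DERIV_deriv_iff_real_differentiable smooth_differentiable)

lemma smooth_isCont: "smooth g \<Longrightarrow> isCont g x"
  using DERIV_isCont smooth_DERIV by blast

lemma smooth_continuous_on: "smooth g \<Longrightarrow> continuous_on S g"
  by (simp add: continuous_at_imp_continuous_on smooth_isCont)

definition diff_op :: "real \<Rightarrow> (real \<Rightarrow> real) \<Rightarrow> real \<Rightarrow> real" where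
  "diff_op l g = (\<lambda>x. deriv g x - l * g x)"

lemma deriv_diff_op: "smooth g \<Longrightarrow> deriv (diff_op l g) = diff_op l (deriv g)"
proof
  fix x
  assume g: "smooth g"
  have "((\<lambda>x. deriv g x - l * g x) has_real_derivative deriv (deriv g) x - l * deriv g x) (at x)"
    by (intro DERIV_diff DERIV_cmult smooth_DERIV smooth_deriv g)
  then show "deriv (diff_op l g) x = diff_op l (deriv g) x"
    unfolding diff_op_def by (rule DERIV_imp_deriv)
qed

lemma higher_deriv_diff_op: "smooth g \<Longrightarrow> (deriv ^^ m) (diff_op l g) = diff_op l ((deriv ^^ m) g)"
  by (induction m) (auto simp: deriv_diff_op smooth_higher_deriv)

lemma smooth_diff_op: "smooth g \<Longrightarrow> smooth (diff_op l g)"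
proof -
  assume g: "smooth g"
  have "(deriv ^^ k) (diff_op l g) differentiable (at x)" for k x
  proof -
    have "(deriv ^^ Suc k) g differentiable (at x)" "(deriv ^^ k) g differentiable (at x)"
      using g unfolding smooth_def by blast+
    then show ?thesis
      unfolding higher_deriv_diff_op[OF g]
      by (auto simp: diff_op_def intro!: differentiable_diff differentiable_mult)
  qed
  then show ?thesis unfolding smooth_def by blast
qed

lemma smooth_fold_diff_op: "smooth g \<Longrightarrow> smooth (fold diff_op ls g)"
  by (induction ls arbitrary: g) (auto intro: smooth_diff_op)

lemma deriv_fold_diff_op: "smooth g \<Longrightarrow> deriv (fold diff_op ls g) = fold diff_op ls (deriv g)"
  by (induction ls arbitrary: g) (auto simp: deriv_diff_op smooth_diff_op)

section \<open>Exponential polynomials\<close>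

definition exp_poly :: "(nat \<Rightarrow> real poly) \<Rightarrow> (nat \<Rightarrow> real) \<Rightarrow> nat set \<Rightarrow> real \<Rightarrow> real" where
  "exp_poly p \<mu> J x = (\<Sum>j\<in>J. poly (p j) x * exp (\<mu> j * x))"

text \<open>\<open>(D - l) (p(x) e\<^sup>\<mu>\<^sup>x) = (poly_diff_op \<mu> l p)(x) e\<^sup>\<mu>\<^sup>x\<close>.\<close>
definition poly_diff_op :: "real \<Rightarrow> real \<Rightarrow> real poly \<Rightarrow> real poly" where
  "poly_diff_op \<mu> l p = pderiv p + smult (\<mu> - l) p"

lemma has_real_derivative_exp_poly:
  assumes "finite J"
  shows "(exp_poly p \<mu> J has_real_derivative exp_poly (\<lambda>j. poly_diff_op (\<mu> j) 0 (p j)) \<mu> J x) (at x)"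
proof -
  have "((\<lambda>x. \<Sum>j\<in>J. poly (p j) x * exp (\<mu> j * x)) has_real_derivative
      (\<Sum>j\<in>J. poly (pderiv (p j)) x * exp (\<mu> j * x) + poly (p j) x * (exp (\<mu> j * x) * \<mu> j))) (at x)"
    by (rule DERIV_sum) (auto intro!: derivative_eq_intros poly_DERIV)
  then show ?thesis
    unfolding exp_poly_def[abs_def] poly_diff_op_def
    by (simp add: algebra_simps)
qed

lemma deriv_exp_poly:
  "finite J \<Longrightarrow> deriv (exp_poly p \<mu> J) = exp_poly (\<lambda>j. poly_diff_op (\<mu> j) 0 (p j)) \<mu> J"
  using has_real_derivative_exp_poly DERIV_imp_deriv by blast

lemma smooth_exp_poly:
  assumes "finite J"
  shows "smooth (exp_poly p \<mu> J)"
proof -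
  have "\<exists>p'. (deriv ^^ k) (exp_poly p \<mu> J) = exp_poly p' \<mu> J" for k
    by (induction k) (auto simp: deriv_exp_poly[OF assms])
  then show ?thesis
    unfolding smooth_def
    using has_real_derivative_exp_poly[OF assms] real_differentiable_def by metis
qed

lemma diff_op_exp_poly:
  assumes "finite J"
  shows "diff_op l (exp_poly p \<mu> J) = exp_poly (\<lambda>j. poly_diff_op (\<mu> j) l (p j)) \<mu> J"
  unfolding diff_op_def deriv_exp_poly[OF assms]
  by (auto simp: exp_poly_def poly_diff_op_def sum_distrib_left sum_subtractf[symmetric]
      algebra_simps intro!: sum.cong)

lemma fold_diff_op_exp_poly:
  "finite J \<Longrightarrow> fold diff_op ls (exp_poly p \<mu> J) = exp_poly (\<lambda>j. fold (poly_diff_op (\<mu> j)) ls (p j)) \<mu> J"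
  by (induction ls arbitrary: p) (simp_all add: diff_op_exp_poly)

lemma degree_fold_poly_diff_op: "degree (fold (poly_diff_op \<mu>) ls p) \<le> degree p"
proof (induction ls arbitrary: p)
  case (Cons l ls)
  have "degree (poly_diff_op \<mu> l p) \<le> degree p"
    unfolding poly_diff_op_def
    by (rule order.trans[OF degree_add_le_max]) (auto simp: degree_pderiv)
  then show ?case using Cons.IH order.trans by fastforce
qed simp

lemma fold_poly_diff_op_0 [simp]: "fold (poly_diff_op \<mu>) ls 0 = 0"
  by (induction ls) (simp_all add: poly_diff_op_def)

lemma poly_diff_op_self [simp]: "poly_diff_op \<mu> \<mu> = pderiv"
  by (simp add: poly_diff_op_def fun_eq_iff)

lemma higher_pderiv_eq_0: "degree p < n \<Longrightarrow> (pderiv ^^ n) p = 0"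
  by (intro poly_eqI) (simp add: coeff_higher_pderiv coeff_eq_0)

lemma fold_poly_diff_op_eq_0:
  "degree p < n \<Longrightarrow> fold (poly_diff_op \<mu>) (xs @ replicate n \<mu> @ ys) p = 0"
  using degree_fold_poly_diff_op[of \<mu> xs p] by (simp add: higher_pderiv_eq_0)

text \<open>The roots \<open>\<eta>\<^sub>j\<close> with multiplicities \<open>\<sigma>\<^sub>j\<close>: folding \<^const>\<open>diff_op\<close> over this list
  gives the operator \<open>\<Prod>\<^sub>j (D - \<eta>\<^sub>j)\<^bsup>\<sigma>\<^sub>j\<^esup>\<close>.\<close>
definition root_list :: "(nat \<Rightarrow> nat) \<Rightarrow> (nat \<Rightarrow> real) \<Rightarrow> nat \<Rightarrow> real list" where
  "root_list \<sigma> \<eta> r = concat (map (\<lambda>j. replicate (\<sigma> j) (\<eta> j)) [1..<Suc r])"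

lemma length_root_list: "length (root_list \<sigma> \<eta> r) = (\<Sum>j=1..r. \<sigma> j)"
proof -
  have "length (root_list \<sigma> \<eta> r) = sum_list (map \<sigma> [1..<Suc r])"
    by (simp add: root_list_def length_concat comp_def)
  also have "\<dots> = sum \<sigma> (set [1..<Suc r])"
    by (rule sum_set_upt_conv_sum_list_nat[symmetric])
  also have "set [1..<Suc r] = {1..r}"
    by (simp only: set_upt atLeastLessThanSuc_atLeastAtMost)
  finally show ?thesis .
qed

lemma root_list_split:
  assumes "j \<in> {1..r}"
  obtains xs ys where "root_list \<sigma> \<eta> r = xs @ replicate (\<sigma> j) (\<eta> j) @ ys"
proof -
  have "replicate (\<sigma> j) (\<eta> j) \<in> set (map (\<lambda>j. replicate (\<sigma> j) (\<eta> j)) [1..<Suc r])"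
    using assms by (force simp del: upt_Suc)
  then obtain us vs where "map (\<lambda>j. replicate (\<sigma> j) (\<eta> j)) [1..<Suc r] = us @ replicate (\<sigma> j) (\<eta> j) # vs"
    by (meson split_list)
  then show ?thesis using that[of "concat us" "concat vs"] by (simp add: root_list_def)
qed

lemma fold_diff_op_root_list_exp_poly:
  assumes "\<And>j. j \<in> {1..r} \<Longrightarrow> degree (q j) < \<sigma> j"
  shows "fold diff_op (root_list \<sigma> \<eta> r) (exp_poly q \<eta> {1..r}) = (\<lambda>_. 0)"
proof -
  have "fold (poly_diff_op (\<eta> j)) (root_list \<sigma> \<eta> r) (q j) = 0" if "j \<in> {1..r}" for j
    using root_list_split[OF that] fold_poly_diff_op_eq_0 assms[OF that] by metis
  then show ?thesis by (auto simp: fold_diff_op_exp_poly exp_poly_def)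
qed

section \<open>Zeros of functions annihilated by products of \<open>D - \<lambda>\<close>\<close>

lemma has_real_derivative_exp_diff_op:
  assumes "g differentiable (at x)"
  shows "((\<lambda>x. exp (- l * x) * g x) has_real_derivative exp (- l * x) * diff_op l g x) (at x)"
proof -
  have "(g has_real_derivative deriv g x) (at x)"
    using assms DERIV_deriv_iff_real_differentiable by blast
  then show ?thesis
    unfolding diff_op_def by (auto intro!: derivative_eq_intros simp: algebra_simps)
qed

lemma diff_op_mean_value:
  assumes "\<And>x. g differentiable (at x)" "a < b"
  shows "\<exists>\<xi>. a < \<xi> \<and> \<xi> < b \<and>
    exp (- l * b) * g b - exp (- l * a) * g a = (b - a) * exp (- l * \<xi>) * diff_op l g \<xi>"
  using MVT2[OF assms(2) has_real_derivative_exp_diff_op[OF assms(1)]] by (auto simp: mult.assoc)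

lemma diff_op_zero_between:
  assumes "\<And>x. g differentiable (at x)" "a < b" "g a = 0" "g b = 0"
  shows "\<exists>w. a < w \<and> w < b \<and> diff_op l g w = 0"
  using diff_op_mean_value[OF assms(1,2), of l] assms(2-4) by auto

lemma diff_op_eq_0_imp_exp:
  assumes "\<And>x. g differentiable (at x)" "diff_op l g = (\<lambda>_. 0)"
  shows "g x = g 0 * exp (l * x)"
proof -
  have "((\<lambda>x. exp (- l * x) * g x) has_real_derivative 0) (at y)" for y
    using has_real_derivative_exp_diff_op[OF assms(1), of l y] assms(2) by simp
  then have "exp (- l * x) * g x = exp (- l * 0) * g 0"
    by (rule DERIV_isconst_all[OF allI])
  then show ?thesis by (simp add: exp_minus field_simps)
qed

lemma fold_diff_op_zeros_imp_eq_0: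
  assumes "smooth g" "fold diff_op ls g = (\<lambda>_. 0)" "length ls \<le> n"
    and "\<And>i. Suc i < n \<Longrightarrow> z i < z (Suc i)" "\<And>i. i < n \<Longrightarrow> g (z i) = 0"
  shows "g = (\<lambda>_. 0)"
  using assms
proof (induction ls arbitrary: g n z)
  case (Cons l ls)
  then obtain n' where n: "n = Suc n'" by (cases n) auto
  have "\<exists>w. z i < w \<and> w < z (Suc i) \<and> diff_op l g w = 0" if "i < n'" for i
    using diff_op_zero_between[OF smooth_differentiable[OF Cons.prems(1)]] Cons.prems(4,5) that n
    by simp
  then obtain w where w: "\<And>i. i < n' \<Longrightarrow> z i < w i \<and> w i < z (Suc i) \<and> diff_op l g (w i) = 0"
    by metis
  have "diff_op l g = (\<lambda>_. 0)"
  proof (rule Cons.IH)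
    show "w i < w (Suc i)" if "Suc i < n'" for i
      using w[of i] w[of "Suc i"] that by fastforce
  qed (use Cons.prems n w smooth_diff_op in auto)
  then have g: "g x = g 0 * exp (l * x)" for x
    using diff_op_eq_0_imp_exp smooth_differentiable Cons.prems(1) by blast
  have "g (z 0) = 0" using Cons.prems(5) n by simp
  then have "g 0 = 0" using g[of "z 0"] by simp
  then show ?case by (metis g mult_zero_left)
qed simp

definition antiperiodic_bc :: "nat \<Rightarrow> (real \<Rightarrow> real) \<Rightarrow> bool" where
  "antiperiodic_bc n g \<longleftrightarrow> (\<forall>m<n. (deriv ^^ m) g 1 = - (deriv ^^ m) g 0)"

lemma antiperiodic_bcD:
  "antiperiodic_bc n g \<Longrightarrow> 0 < n \<Longrightarrow> g 1 = - g 0"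
  "antiperiodic_bc n g \<Longrightarrow> 1 < n \<Longrightarrow> deriv g 1 = - deriv g 0"
  unfolding antiperiodic_bc_def by (metis funpow_0, metis One_nat_def funpow_0 funpow_Suc_right o_apply)

lemma antiperiodic_bc_mono: "antiperiodic_bc n g \<Longrightarrow> m \<le> n \<Longrightarrow> antiperiodic_bc m g"
  unfolding antiperiodic_bc_def by auto

lemma antiperiodic_bc_deriv: "antiperiodic_bc n g \<Longrightarrow> antiperiodic_bc (n - 1) (deriv g)"
  unfolding antiperiodic_bc_def by (metis comp_apply funpow_Suc_right less_diff_conv Suc_eq_plus1)

lemma antiperiodic_bc_diff_op:
  assumes "smooth g" "antiperiodic_bc (Suc n) g"
  shows "antiperiodic_bc n (diff_op l g)"
  unfolding antiperiodic_bc_def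
proof (intro allI impI)
  fix m assume "m < n"
  then have "(deriv ^^ Suc m) g 1 = - (deriv ^^ Suc m) g 0" "(deriv ^^ m) g 1 = - (deriv ^^ m) g 0"
    using assms(2) unfolding antiperiodic_bc_def by auto
  then show "(deriv ^^ m) (diff_op l g) 1 = - (deriv ^^ m) (diff_op l g) 0"
    unfolding higher_deriv_diff_op[OF assms(1)] by (simp add: diff_op_def)
qed

lemma fold_diff_op_antiperiodic_imp_eq_0:
  assumes "smooth g" "fold diff_op ls g = (\<lambda>_. 0)" "antiperiodic_bc (length ls) g"
  shows "g = (\<lambda>_. 0)"
  using assms
proof (induction ls arbitrary: g)
  case (Cons l ls)
  have "diff_op l g = (\<lambda>_. 0)"
    using Cons antiperiodic_bc_diff_op smooth_diff_op by auto
  then have g: "g x = g 0 * exp (l * x)" for x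
    using diff_op_eq_0_imp_exp smooth_differentiable Cons.prems(1) by blast
  have "g 1 = - g 0" using antiperiodic_bcD(1)[OF Cons.prems(3)] by simp
  then have "g 0 * (exp l + 1) = 0" using g[of 1] by (simp add: algebra_simps)
  moreover have "exp l + 1 \<noteq> 0" using exp_gt_zero[of l] by linarith
  ultimately have "g 0 = 0" by simp
  then show ?case by (metis g mult_zero_left)
qed simp

lemma sign_change_imp_zero:
  fixes g :: "real \<Rightarrow> real"
  assumes "continuous_on {a..b} g" "a \<le> b" "g a * g b < 0"
  shows "\<exists>x. a < x \<and> x < b \<and> g x = 0"
proof -
  have "\<exists>x. a \<le> x \<and> x \<le> b \<and> g x = 0"
  proof (cases "g a < 0")
    case True
    then show ?thesis using assms IVT'[of g a 0 b] by (auto simp: mult_less_0_iff)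
  next
    case False
    then show ?thesis using assms IVT2'[of g b 0 a] by (auto simp: mult_less_0_iff)
  qed
  moreover have "g a \<noteq> 0" "g b \<noteq> 0" using assms(3) by auto
  ultimately show ?thesis by (metis order_le_less)
qed

lemma antiperiodic_zero_outside:
  fixes u :: "real \<Rightarrow> real"
  assumes "continuous_on {0..1} u" "u 1 = - u 0" "0 \<le> a" "a < b" "b \<le> 1" "u a * u b > 0"
  shows "\<exists>w. u w = 0 \<and> (0 \<le> w \<and> w < a \<or> b < w \<and> w < 1)"
proof (cases "u 0 = 0")
  case True
  then have "a \<noteq> 0" using assms(6) by auto
  then show ?thesis using True assms(3) by auto
next
  case False
  show ?thesis
  proof (cases "u b * u 1 < 0")
    case True
    then show ?thesis
      using sign_change_imp_zero[of b 1 u] continuous_on_subset[OF assms(1)] assms by auto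
  next
    case nonneg: False
    have "u a * u 0 < 0"
    proof -
      have "u b * u 1 > 0" using nonneg False assms(2,6) by (auto simp: less_le)
      then show ?thesis using assms(2,6) by (auto simp: zero_less_mult_iff mult_less_0_iff)
    qed
    then show ?thesis
      using sign_change_imp_zero[of 0 a u] continuous_on_subset[OF assms(1)] assms
      by (auto simp: mult.commute)
  qed
qed

definition three_zeros :: "(real \<Rightarrow> real) \<Rightarrow> bool" where
  "three_zeros g \<longleftrightarrow>
     (\<exists>z0 z1 z2. 0 \<le> z0 \<and> z0 < z1 \<and> z1 < z2 \<and> z2 < 1 \<and> g z0 = 0 \<and> g z1 = 0 \<and> g z2 = 0)"

lemma diff_op_wraparound_zero:
  assumes g: "smooth g" "antiperiodic_bc 2 g"
    and z: "0 \<le> z0" "z0 < z2" "z2 < 1" "g z0 = 0" "g z2 = 0"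
  shows "\<exists>w. diff_op l g w = 0 \<and> (0 \<le> w \<and> w < z0 \<or> z2 < w \<and> w < 1)"
proof (cases "g 1 = 0")
  case True
  then show ?thesis
    using diff_op_zero_between[OF smooth_differentiable[OF g(1)] z(3) z(5) True] by auto
next
  case False
  let ?u = "diff_op l g"
  have g10: "g 1 = - g 0" and u10: "?u 1 = - ?u 0"
    using antiperiodic_bcD[OF g(2)] by (auto simp: diff_op_def)
  then have "z0 \<noteq> 0" using False z(4) by auto
  then have "0 < z0" using z(1) by simp
  text \<open>By the mean value theorem for \<open>e\<^sup>-\<^sup>l\<^sup>x g(x)\<close>, \<open>(D - l) g\<close> takes the sign of
    \<open>g(1) = -g(0)\<close> somewhere in \<open>(z2, 1)\<close> and somewhere in \<open>(0, z0)\<close>.\<close>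
  obtain \<xi> where \<xi>: "z2 < \<xi>" "\<xi> < 1"
    "exp (- l) * g 1 = (1 - z2) * exp (- l * \<xi>) * ?u \<xi>"
    using diff_op_mean_value[OF smooth_differentiable[OF g(1)] z(3), of l] z(5) by auto
  obtain \<zeta> where \<zeta>: "0 < \<zeta>" "\<zeta> < z0" "g 1 = z0 * exp (- l * \<zeta>) * ?u \<zeta>"
    using diff_op_mean_value[OF smooth_differentiable[OF g(1)] \<open>0 < z0\<close>, of l] z(4) g10 by auto
  have "?u \<xi> * g 1 > 0"
  proof -
    have "exp (- l) * (g 1 * g 1) = ((1 - z2) * exp (- l * \<xi>)) * (?u \<xi> * g 1)"
      unfolding mult.assoc[symmetric] \<xi>(3) ..
    moreover have "exp (- l) * (g 1 * g 1) > 0"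
      using False by (auto simp: zero_less_mult_iff)
    moreover have "(1 - z2) * exp (- l * \<xi>) > 0" using z(3) by simp
    ultimately show ?thesis by (metis zero_less_mult_pos)
  qed
  moreover have "?u \<zeta> * g 1 > 0"
  proof -
    have "g 1 * g 1 = (z0 * exp (- l * \<zeta>)) * (?u \<zeta> * g 1)"
      unfolding mult.assoc[symmetric] \<zeta>(3)[symmetric] ..
    moreover have "g 1 * g 1 > 0" using False by (metis not_real_square_gt_zero)
    moreover have "z0 * exp (- l * \<zeta>) > 0" using \<open>0 < z0\<close> by simp
    ultimately show ?thesis by (metis zero_less_mult_pos)
  qed
  ultimately have "?u \<zeta> * ?u \<xi> > 0"
    by (auto simp: zero_less_mult_iff)
  moreover have "\<zeta> < \<xi>" using \<zeta>(2) \<xi>(1) z(2) by linarith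
  ultimately obtain w where "?u w = 0" "0 \<le> w \<and> w < \<zeta> \<or> \<xi> < w \<and> w < 1"
    using antiperiodic_zero_outside[OF smooth_continuous_on[OF smooth_diff_op[OF g(1)]] u10,
        of \<zeta> \<xi>] \<zeta>(1) \<xi>(2) by auto
  then show ?thesis using \<zeta>(2) \<xi>(1) by auto
qed

lemma three_zeros_diff_op:
  assumes "smooth g" "antiperiodic_bc 2 g" "three_zeros g"
  shows "three_zeros (diff_op l g)"
proof -
  obtain z0 z1 z2 where z: "0 \<le> z0" "z0 < z1" "z1 < z2" "z2 < 1" "g z0 = 0" "g z1 = 0" "g z2 = 0"
    using assms(3) unfolding three_zeros_def by blast
  note g' = smooth_differentiable[OF assms(1)]
  obtain w0 where "z0 < w0" "w0 < z1" "diff_op l g w0 = 0"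
    using diff_op_zero_between[OF g' z(2,5,6)] by blast
  moreover obtain w1 where "z1 < w1" "w1 < z2" "diff_op l g w1 = 0"
    using diff_op_zero_between[OF g' z(3,6,7)] by blast
  moreover obtain w where "diff_op l g w = 0" "0 \<le> w \<and> w < z0 \<or> z2 < w \<and> w < 1"
    using diff_op_wraparound_zero[OF assms(1,2) z(1) _ z(4,5,7)] z(2,3) by auto
  ultimately show ?thesis
    unfolding three_zeros_def using z(1-4) by (smt (verit))
qed

lemma three_zeros_fold_diff_op:
  assumes "smooth g" "antiperiodic_bc (Suc (length ls)) g" "three_zeros g"
  shows "three_zeros (fold diff_op ls g)"
  using assms
proof (induction ls arbitrary: g)
  case (Cons l ls)
  have "antiperiodic_bc 2 g" using antiperiodic_bc_mono[OF Cons.prems(2)] by simp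
  then show ?case
    using Cons smooth_diff_op three_zeros_diff_op antiperiodic_bc_diff_op by simp
qed simp

lemma fold_diff_op_three_zeros_imp_eq_0:
  assumes "smooth g" "fold diff_op ls g = (\<lambda>_. 0)" "3 \<le> length ls"
    and "antiperiodic_bc (length ls - 2) g" "three_zeros g"
  shows "g = (\<lambda>_. 0)"
proof -
  define ks where "ks = take (length ls - 3) ls"
  define ms where "ms = drop (length ls - 3) ls"
  have ls: "ls = ks @ ms" and len: "length ms = 3" "length ks = length ls - 3"
    using assms(3) by (simp_all add: ks_def ms_def)
  have "Suc (length ks) = length ls - 2" using assms(3) len by simp
  then have "antiperiodic_bc (Suc (length ks)) g" using assms(4) by simp
  then have "three_zeros (fold diff_op ks g)"
    using three_zeros_fold_diff_op assms(1,5) by blast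
  then obtain z0 z1 z2 where z: "0 \<le> z0" "z0 < z1" "z1 < z2" "z2 < 1"
    "fold diff_op ks g z0 = 0" "fold diff_op ks g z1 = 0" "fold diff_op ks g z2 = 0"
    unfolding three_zeros_def by blast
  have "fold diff_op ks g = (\<lambda>_. 0)"
  proof (rule fold_diff_op_zeros_imp_eq_0[of _ ms 3 "nth [z0, z1, z2]"])
    show "fold diff_op ms (fold diff_op ks g) = (\<lambda>_. 0)" using assms(2) ls by simp
    show "[z0, z1, z2] ! i < [z0, z1, z2] ! Suc i" if "Suc i < 3" for i
      using that z by (auto simp: less_Suc_eq numeral_3_eq_3)
    show "fold diff_op ks g ([z0, z1, z2] ! i) = 0" if "i < 3" for i
      using that z by (auto simp: less_Suc_eq numeral_3_eq_3)
  qed (use assms(1) len smooth_fold_diff_op in auto)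
  moreover have "antiperiodic_bc (length ks) g"
    using antiperiodic_bc_mono[OF assms(4)] len by simp
  ultimately show ?thesis
    using fold_diff_op_antiperiodic_imp_eq_0 assms(1) by blast
qed

lemma three_zeros_if_sign_alternates:
  fixes g :: "real \<Rightarrow> real"
  assumes "continuous_on {0..1} g" "g 1 = - g 0"
    and s: "0 \<le> s1" "s1 < s2" "s2 < s3" "s3 \<le> 1" "g s1 * g s2 < 0" "g s2 * g s3 < 0"
  shows "three_zeros g"
proof -
  have cont: "continuous_on {a..b} g" if "0 \<le> a" "b \<le> 1" for a b
    using continuous_on_subset[OF assms(1)] that by auto
  obtain z0 where "s1 < z0" "z0 < s2" "g z0 = 0"
    using sign_change_imp_zero[OF cont, of s1 s2] s by auto
  moreover obtain z1 where "s2 < z1" "z1 < s3" "g z1 = 0"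
    using sign_change_imp_zero[OF cont, of s2 s3] s by auto
  moreover have "g s1 * g s3 > 0"
    using s(5,6) by (auto simp: mult_less_0_iff zero_less_mult_iff)
  then obtain w where "g w = 0" "0 \<le> w \<and> w < s1 \<or> s3 < w \<and> w < 1"
    using antiperiodic_zero_outside[OF assms(1,2), of s1 s3] s by auto
  ultimately show ?thesis
    unfolding three_zeros_def using s(1-4) by (smt (verit))
qed

section \<open>Sign changes and monotonicity\<close>

lemma fold_diff_op_no_sign_alternation:
  assumes "smooth g" "fold diff_op ls g = (\<lambda>_. 0)" "antiperiodic_bc (length ls - 2) g"
    and s: "0 \<le> s1" "s1 < s2" "s2 < s3" "s3 \<le> 1" "g s1 * g s2 < 0" "g s2 * g s3 < 0"
  shows False
proof -
  have "g = (\<lambda>_. 0)"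
  proof (cases "3 \<le> length ls")
    case True
    then have "g 1 = - g 0" using antiperiodic_bcD(1)[OF assms(3)] by simp
    then have "three_zeros g"
      using three_zeros_if_sign_alternates[OF smooth_continuous_on[OF assms(1)] _ s] by blast
    then show ?thesis using fold_diff_op_three_zeros_imp_eq_0 assms(1-3) True by blast
  next
    case False
    obtain z0 where "s1 < z0" "z0 < s2" "g z0 = 0"
      using sign_change_imp_zero[OF smooth_continuous_on[OF assms(1)], of s1 s2] s by auto
    moreover obtain z1 where "s2 < z1" "z1 < s3" "g z1 = 0"
      using sign_change_imp_zero[OF smooth_continuous_on[OF assms(1)], of s2 s3] s by auto
    ultimately show ?thesis
    proof (intro fold_diff_op_zeros_imp_eq_0[OF assms(1,2), of 2 "nth [z0, z1]"])
      show "[z0, z1] ! i < [z0, z1] ! Suc i" if "Suc i < 2" for i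
        using that \<open>z0 < s2\<close> \<open>s2 < z1\<close> by (simp add: numeral_2_eq_2)
    qed (use False in \<open>auto simp: less_Suc_eq numeral_2_eq_2\<close>)
  qed
  then show False using s(5) by simp
qed

lemma fold_diff_op_one_signed:
  assumes "smooth g" "fold diff_op ls g = (\<lambda>_. 0)" "length ls \<le> 1"
  shows "(\<forall>x. 0 \<le> g x) \<or> (\<forall>x. g x \<le> 0)"
proof (rule ccontr)
  assume "\<not> ?thesis"
  then obtain x y where "g x * g y < 0" by (auto simp: mult_less_0_iff not_le)
  then obtain z where "g z = 0"
    using sign_change_imp_zero[OF smooth_continuous_on[OF assms(1)], of "min x y" "max x y"]
    by (cases "x \<le> y") (auto simp: min_def max_def mult.commute)
  then have "g = (\<lambda>_. 0)"
    using fold_diff_op_zeros_imp_eq_0[OF assms(1,2), of 1 "\<lambda>_. z"] assms(3) by auto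
  then show False using \<open>g x * g y < 0\<close> by simp
qed

lemma sign_change_point:
  fixes g :: "real \<Rightarrow> real"
  assumes no_alt: "\<And>s1 s2 s3. a \<le> s1 \<Longrightarrow> s1 < s2 \<Longrightarrow> s2 < s3 \<Longrightarrow> s3 \<le> b \<Longrightarrow>
      \<not> (g s1 * g s2 < 0 \<and> g s2 * g s3 < 0)"
    and xy: "a \<le> x" "x < y" "y \<le> b" "g x < 0" "g y > 0"
  shows "\<exists>t. a \<le> t \<and> t \<le> b \<and> (\<forall>s\<in>{a<..<t}. g s \<le> 0) \<and> (\<forall>s\<in>{t<..<b}. 0 \<le> g s)"
proof -
  define N where "N = {s. a \<le> s \<and> s \<le> b \<and> g s < 0}"
  define t where "t = Sup N"
  have "x \<in> N" using xy by (simp add: N_def)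
  have bdd: "bdd_above N" by (rule bdd_aboveI[of _ b]) (simp add: N_def)
  have "x \<le> t" unfolding t_def using cSup_upper[OF \<open>x \<in> N\<close> bdd] .
  have "t \<le> b" unfolding t_def using \<open>x \<in> N\<close> by (intro cSup_least) (auto simp: N_def)
  have "0 \<le> g s" if "t < s" "s < b" for s
  proof (rule ccontr)
    assume "\<not> 0 \<le> g s"
    then have "s \<in> N" using that \<open>x \<le> t\<close> xy(1) by (simp add: N_def)
    then show False using cSup_upper[OF _ bdd] that(1) by (force simp: t_def)
  qed
  moreover have "g s \<le> 0" if s: "a < s" "s < t" for s
  proof (rule ccontr)
    assume pos: "\<not> g s \<le> 0"
    obtain u where "u \<in> N" "s < u"
      using less_cSup_iff[OF _ bdd, of s] \<open>x \<in> N\<close> s(2) by (auto simp: t_def)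
    then have u: "s < u" "u \<le> b" "g u < 0" by (auto simp: N_def)
    show False
    proof (cases "u < y")
      case True
      have "g s * g u < 0" "g u * g y < 0" using pos u(3) xy(5) by (simp_all add: mult_less_0_iff)
      then show False using no_alt[of s u y] s(1) u(1) True xy(3) by simp
    next
      case False
      then have "y < u" using u(3) xy(5) by (cases "y = u") auto
      have "g x * g y < 0" "g y * g u < 0" using xy(4,5) u(3) by (simp_all add: mult_less_0_iff)
      then show False using no_alt[of x y u] xy(1,2) \<open>y < u\<close> u(2) by simp
    qed
  qed
  ultimately show ?thesis using \<open>x \<le> t\<close> \<open>t \<le> b\<close> xy(1) by (intro exI[of _ t]) auto
qed

lemma at_most_one_sign_change:
  fixes g :: "real \<Rightarrow> real"
  assumes no_alt: "\<And>s1 s2 s3. a \<le> s1 \<Longrightarrow> s1 < s2 \<Longrightarrow> s2 < s3 \<Longrightarrow> s3 \<le> b \<Longrightarrow>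
      \<not> (g s1 * g s2 < 0 \<and> g s2 * g s3 < 0)"
    and "a \<le> b"
  shows "\<exists>t. a \<le> t \<and> t \<le> b \<and>
    ((\<forall>s\<in>{a<..<t}. g s \<le> 0) \<and> (\<forall>s\<in>{t<..<b}. 0 \<le> g s) \<or>
     (\<forall>s\<in>{a<..<t}. 0 \<le> g s) \<and> (\<forall>s\<in>{t<..<b}. g s \<le> 0))"
proof (cases "\<exists>x y. a \<le> x \<and> x < y \<and> y \<le> b \<and> g x * g y < 0")
  case True
  then obtain x y where xy: "a \<le> x" "x < y" "y \<le> b" "g x * g y < 0" by blast
  show ?thesis
  proof (cases "g x < 0")
    case True
    then have "g y > 0" using xy(4) by (simp add: mult_less_0_iff)
    then show ?thesis using sign_change_point[of a b g, OF no_alt xy(1-3) True] by blast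
  next
    case False
    then have "- g x < 0" "- g y > 0" using xy(4) by (auto simp: mult_less_0_iff)
    then have "\<exists>t. a \<le> t \<and> t \<le> b \<and> (\<forall>s\<in>{a<..<t}. - g s \<le> 0) \<and> (\<forall>s\<in>{t<..<b}. 0 \<le> - g s)"
      using sign_change_point[of a b "\<lambda>s. - g s", OF _ xy(1-3)] no_alt by simp
    then show ?thesis by auto
  qed
next
  case False
  then have "(\<forall>s\<in>{a<..<b}. 0 \<le> g s) \<or> (\<forall>s\<in>{a<..<b}. g s \<le> 0)"
    by (smt (verit, del_insts) greaterThanLessThan_iff linorder_neqE_linordered_idom
        mult_neg_pos mult_pos_neg)
  then show ?thesis using \<open>a \<le> b\<close> by (intro exI[of _ a]) auto
qed

lemma mono_on_if_deriv_nonneg: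
  fixes f :: "real \<Rightarrow> real"
  assumes "\<And>x. (f has_real_derivative f' x) (at x)" "\<forall>x\<in>{a<..<b}. 0 \<le> f' x"
  shows "mono_on {a..b} f"
proof (rule mono_onI)
  fix x y assume xy: "x \<in> {a..b}" "y \<in> {a..b}" "x \<le> y"
  show "f x \<le> f y"
  proof (rule DERIV_nonneg_imp_increasing_open[OF xy(3)])
    show "continuous_on {x..y} f"
      using assms(1) by (meson DERIV_isCont continuous_at_imp_continuous_on)
  qed (use assms xy in fastforce)
qed

lemma antimono_on_if_deriv_nonpos:
  fixes f :: "real \<Rightarrow> real"
  assumes "\<And>x. (f has_real_derivative f' x) (at x)" "\<forall>x\<in>{a<..<b}. f' x \<le> 0"
  shows "antimono_on {a..b} f"
proof (rule monotone_onI)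
  fix x y assume xy: "x \<in> {a..b}" "y \<in> {a..b}" "x \<le> y"
  show "f y \<le> f x"
  proof (rule DERIV_nonpos_imp_decreasing_open[OF xy(3)])
    show "continuous_on {x..y} f"
      using assms(1) by (meson DERIV_isCont continuous_at_imp_continuous_on)
  qed (use assms xy in fastforce)
qed

text \<open>Without boundary conditions (\<open>length ls \<le> 1\<close>) the values \<open>f(0)\<close> and \<open>-f(1)\<close> are unrelated,
  but then \<open>f'\<close> has constant sign and \<open>t = 0\<close>.\<close>
lemma fold_diff_op_piecewise_monotone:
  assumes "smooth f" "fold diff_op ls f = (\<lambda>_. 0)" "antiperiodic_bc (length ls - 1) f"
  shows "\<exists>t. 0 \<le> t \<and> t \<le> 1 \<and> (t = 0 \<or> f 1 = - f 0) \<and>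
    (antimono_on {0..t} f \<and> mono_on {t..1} f \<or> mono_on {0..t} f \<and> antimono_on {t..1} f)"
proof -
  define g where "g = deriv f"
  have g: "smooth g" "fold diff_op ls g = (\<lambda>_. 0)" "antiperiodic_bc (length ls - 2) g"
      unfolding g_def
    using smooth_deriv[OF assms(1)] deriv_fold_diff_op[OF assms(1), of ls, symmetric]
      antiperiodic_bc_deriv[OF assms(3)] assms(2)
    by (simp_all add: numeral_2_eq_2)
  have "\<exists>t. 0 \<le> t \<and> t \<le> 1 \<and> (t = 0 \<or> f 1 = - f 0) \<and>
    ((\<forall>s\<in>{0<..<t}. g s \<le> 0) \<and> (\<forall>s\<in>{t<..<1}. 0 \<le> g s) \<or>
     (\<forall>s\<in>{0<..<t}. 0 \<le> g s) \<and> (\<forall>s\<in>{t<..<1}. g s \<le> 0))"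
  proof (cases "length ls \<le> 1")
    case True
    then show ?thesis using fold_diff_op_one_signed[OF g(1,2)] by (intro exI[of _ 0]) auto
  next
    case False
    then have "f 1 = - f 0" using antiperiodic_bcD(1)[OF assms(3)] by simp
    moreover have "\<exists>t. 0 \<le> t \<and> t \<le> 1 \<and>
      ((\<forall>s\<in>{0<..<t}. g s \<le> 0) \<and> (\<forall>s\<in>{t<..<1}. 0 \<le> g s) \<or>
       (\<forall>s\<in>{0<..<t}. 0 \<le> g s) \<and> (\<forall>s\<in>{t<..<1}. g s \<le> 0))"
      using fold_diff_op_no_sign_alternation[OF g] by (intro at_most_one_sign_change) auto
    ultimately show ?thesis by blast
  qed
  then obtain t where t: "0 \<le> t" "t \<le> 1" "t = 0 \<or> f 1 = - f 0"
    and signs: "(\<forall>s\<in>{0<..<t}. g s \<le> 0) \<and> (\<forall>s\<in>{t<..<1}. 0 \<le> g s) \<or>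
      (\<forall>s\<in>{0<..<t}. 0 \<le> g s) \<and> (\<forall>s\<in>{t<..<1}. g s \<le> 0)"
    by blast
  have f': "(f has_real_derivative g x) (at x)" for x
    using smooth_DERIV[OF assms(1)] by (simp add: g_def)
  from signs show ?thesis
  proof
    assume "(\<forall>s\<in>{0<..<t}. g s \<le> 0) \<and> (\<forall>s\<in>{t<..<1}. 0 \<le> g s)"
    then have "antimono_on {0..t} f \<and> mono_on {t..1} f"
      using antimono_on_if_deriv_nonpos[OF f'] mono_on_if_deriv_nonneg[OF f'] by blast
    then show ?thesis using t by blast
  next
    assume "(\<forall>s\<in>{0<..<t}. 0 \<le> g s) \<and> (\<forall>s\<in>{t<..<1}. g s \<le> 0)"
    then have "mono_on {0..t} f \<and> antimono_on {t..1} f"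
      using antimono_on_if_deriv_nonpos[OF f'] mono_on_if_deriv_nonneg[OF f'] by blast
    then show ?thesis using t by blast
  qed
qed

section \<open>Antiperiodic functions\<close>

lemma mono_on_uminus_iff: "mono_on S (\<lambda>x. - f x) \<longleftrightarrow> antimono_on S (f :: 'a::order \<Rightarrow> real)"
  unfolding monotone_on_def by auto

lemma antimono_on_uminus_iff: "antimono_on S (\<lambda>x. - f x) \<longleftrightarrow> mono_on S (f :: 'a::order \<Rightarrow> real)"
  unfolding monotone_on_def by auto

text \<open>The two pieces fit together because \<open>f(1) = -f(0)\<close> bounds \<open>f\<close> on \<open>[t, 1]\<close> from above and
  \<open>h(x) = -f(x - 1)\<close> on \<open>[1, t + 1)\<close> from below.\<close>
lemma antiperiodic_mono_on_from_valley:
  fixes f h :: "real \<Rightarrow> real"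
  assumes t: "0 \<le> t" "t \<le> 1" and A: "antimono_on {0..t} f" and M: "mono_on {t..1} f"
    and bc: "t = 0 \<or> f 1 = - f 0"
    and h_f: "\<And>x. 0 \<le> x \<Longrightarrow> x < 1 \<Longrightarrow> h x = f x" and antiper: "\<And>x. h (x + 1) = - h x"
  shows "mono_on {t..<t+1} h"
proof (rule mono_onI)
  fix x y assume x: "x \<in> {t..<t+1}" and y: "y \<in> {t..<t+1}" and "x \<le> y"
  have h_shift: "h z = - f (z - 1)" if "1 \<le> z" "z < 2" for z
    using antiper[of "z - 1"] h_f[of "z - 1"] that by simp
  show "h x \<le> h y"
  proof (cases "y < 1")
    case True
    then show ?thesis using h_f mono_onD[OF M] x y t \<open>x \<le> y\<close> by auto
  next
    case False
    then have hy: "h y = - f (y - 1)" and "f (y - 1) \<le> f 0"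
      using h_shift y t monotone_onD[OF A, of 0 "y - 1"] by auto
    show ?thesis
    proof (cases "x < 1")
      case True
      then have "f 1 = - f 0" using bc False y by auto
      moreover have "f x \<le> f 1" "h x = f x" using mono_onD[OF M] h_f x True t by auto
      ultimately show ?thesis using hy \<open>f (y - 1) \<le> f 0\<close> by simp
    next
      case False
      then have "h x = - f (x - 1)" "f (y - 1) \<le> f (x - 1)"
        using h_shift x t y \<open>x \<le> y\<close> monotone_onD[OF A, of "x - 1" "y - 1"] by auto
      then show ?thesis using hy by simp
    qed
  qed
qed

lemma antiperiodic_monotone_on_from_unimodal:
  fixes f h :: "real \<Rightarrow> real"
  assumes "0 \<le> t" "t \<le> 1" "t = 0 \<or> f 1 = - f 0"
    and "antimono_on {0..t} f \<and> mono_on {t..1} f \<or> mono_on {0..t} f \<and> antimono_on {t..1} f"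
    and "\<And>x. 0 \<le> x \<Longrightarrow> x < 1 \<Longrightarrow> h x = f x" "\<And>x. h (x + 1) = - h x"
  shows "mono_on {t..<t+1} h \<or> antimono_on {t..<t+1} h"
  using assms(4)
proof
  assume "antimono_on {0..t} f \<and> mono_on {t..1} f"
  then show ?thesis using antiperiodic_mono_on_from_valley assms by blast
next
  assume "mono_on {0..t} f \<and> antimono_on {t..1} f"
  then have "mono_on {t..<t+1} (\<lambda>x. - h x)"
    using assms by (intro antiperiodic_mono_on_from_valley[of t "\<lambda>x. - f x"])
      (auto simp: mono_on_uminus_iff antimono_on_uminus_iff)
  then show ?thesis by (simp add: mono_on_uminus_iff)
qed

lemma antiperiodic_shift_int:
  fixes h :: "real \<Rightarrow> real"
  assumes "\<And>x. h (x + 1) = - h x"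
  shows "h (x + of_int k) = (if even k then h x else - h x)"
proof (induction k rule: int_induct[where k = 0])
  case (step1 i)
  then show ?case using assms[of "x + of_int i"] by (simp add: add.assoc)
next
  case (step2 i)
  then show ?case using assms[of "x + of_int (i - 1)"] by (auto simp: algebra_simps split: if_splits)
qed simp

lemma antiperiodic_monotone_on_translate:
  fixes h :: "real \<Rightarrow> real"
  assumes "\<And>x. h (x + 1) = - h x" "mono_on {a..<a+1} h \<or> antimono_on {a..<a+1} h"
  shows "mono_on {a + of_int k..<a + of_int k + 1} h \<or> antimono_on {a + of_int k..<a + of_int k + 1} h"
proof -
  let ?c = "of_int k :: real"
  let ?I = "{a + ?c..<a + ?c + 1}"
  define g where "g = h \<circ> (\<lambda>y. y - ?c)"
  have shift_mono: "mono_on ?I (\<lambda>y. y - ?c)" by (rule mono_onI) simp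
  have shift_into: "(\<lambda>y. y - ?c) ` ?I \<subseteq> {a..<a+1}" by auto
  have g_mono: "mono_on ?I g \<or> antimono_on ?I g"
    using assms(2) monotone_on_o[OF _ shift_mono shift_into] unfolding g_def by blast
  have h_g: "h y = (if even k then g y else - g y)" for y
    using antiperiodic_shift_int[where h = h, OF assms(1), of "y - ?c" k] by (simp add: g_def)
  show ?thesis
  proof (cases "even k")
    case True
    then have "h = g" using h_g by auto
    then show ?thesis using g_mono by simp
  next
    case False
    then have "h = (\<lambda>y. - g y)" using h_g by auto
    then show ?thesis using g_mono by (auto simp: mono_on_uminus_iff antimono_on_uminus_iff)
  qed
qed

lemma C_k_DERIV:
  "C_k p h \<Longrightarrow> m < p \<Longrightarrow> ((deriv ^^ m) h has_real_derivative (deriv ^^ Suc m) h x) (at x)"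
  unfolding C_k_def by (simp add: DERIV_deriv_iff_real_differentiable)

lemma C_k_isCont: "C_k p h \<Longrightarrow> m \<le> p \<Longrightarrow> isCont ((deriv ^^ m) h) x"
  by (metis C_k_DERIV C_k_def DERIV_isCont continuous_on_eq_continuous_at le_neq_implies_less
      open_UNIV UNIV_I)

lemma antiperiodic_higher_deriv:
  assumes "C_k p h" "\<And>x. h (x + c) = - h x" "m \<le> p"
  shows "(deriv ^^ m) h (x + c) = - (deriv ^^ m) h x"
  using assms(3)
proof (induction m arbitrary: x)
  case (Suc m)
  then have "m < p" by simp
  have "((\<lambda>y. (deriv ^^ m) h (y + c)) has_real_derivative (deriv ^^ Suc m) h (x + c)) (at x)"
    using C_k_DERIV[OF assms(1) \<open>m < p\<close>] DERIV_shift by blast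
  moreover have "((\<lambda>y. (deriv ^^ m) h (y + c)) has_real_derivative - (deriv ^^ Suc m) h x) (at x)"
    using Suc.IH \<open>m < p\<close> DERIV_minus[OF C_k_DERIV[OF assms(1) \<open>m < p\<close>]] by simp
  ultimately show ?case by (rule DERIV_unique)
qed (simp add: assms(2))

lemma isCont_eq_if_eventually_eq:
  fixes u v :: "real \<Rightarrow> real"
  assumes "isCont u x" "isCont v x" "F \<noteq> bot" "F \<le> at x" "eventually (\<lambda>y. u y = v y) F"
  shows "u x = v x"
proof -
  have "(u \<longlongrightarrow> u x) F" "(v \<longlongrightarrow> v x) F"
    using assms(1,2,4) unfolding isCont_def by (auto intro: tendsto_mono)
  then have "(u \<longlongrightarrow> v x) F" using assms(5) tendsto_cong by blast
  then show ?thesis using tendsto_unique assms(3) \<open>(u \<longlongrightarrow> u x) F\<close> by blast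
qed

lemma antiperiodic_bc_if_C_k:
  assumes "C_k p h" "\<And>x. h (x + 1) = - h x" "smooth f" "\<And>x. 0 \<le> x \<Longrightarrow> x < 1 \<Longrightarrow> h x = f x"
  shows "antiperiodic_bc (Suc p) f"
  unfolding antiperiodic_bc_def
proof (intro allI impI)
  fix m assume "m < Suc p"
  then have cont: "isCont ((deriv ^^ m) h) x" "isCont ((deriv ^^ m) f) x" for x
    using C_k_isCont[OF assms(1)] smooth_isCont[OF smooth_higher_deriv[OF assms(3)]] by auto
  have eq: "\<forall>\<^sub>F y in F. (deriv ^^ m) h y = (deriv ^^ m) f y" if "\<forall>\<^sub>F y in F. y \<in> {0<..<1}" for F
    using that
  proof (rule eventually_mono)
    fix y :: real assume "y \<in> {0<..<1}"
    then have "\<forall>\<^sub>F z in nhds y. h z = f z"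
      using eventually_nhds_in_open[of "{0<..<1}" y] assms(4) by (auto elim: eventually_mono)
    then show "(deriv ^^ m) h y = (deriv ^^ m) f y" by (rule higher_deriv_cong_ev) simp
  qed
  have "(deriv ^^ m) h 0 = (deriv ^^ m) f 0"
    by (rule isCont_eq_if_eventually_eq[OF cont _ at_within_le_at eq])
      (auto intro: eventually_at_rightI[of 0 1])
  moreover have "(deriv ^^ m) h 1 = (deriv ^^ m) f 1"
    by (rule isCont_eq_if_eventually_eq[OF cont _ at_within_le_at eq])
      (auto intro: eventually_at_leftI[of 0 1])
  ultimately show "(deriv ^^ m) f 1 = - (deriv ^^ m) f 0"
    using antiperiodic_higher_deriv[where h = h and c = 1 and m = m and x = 0, OF assms(1,2)]
      \<open>m < Suc p\<close> by simp
qed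

theorem mainTheorem6:
  fixes r :: nat and \<eta> :: "nat \<Rightarrow> real" and q :: "nat \<Rightarrow> real poly"
    and \<sigma> :: "nat \<Rightarrow> nat" and \<gamma> :: nat and h :: "real \<Rightarrow> real"
  assumes distinct: "inj_on \<eta> {1..r}"
    and q_nz: "\<And>j. j \<in> {1..r} \<Longrightarrow> q j \<noteq> 0"
    and sigma_pos: "\<And>j. j \<in> {1..r} \<Longrightarrow> \<sigma> j \<ge> 1"
    and deg: "\<And>j. j \<in> {1..r} \<Longrightarrow> degree (q j) = \<sigma> j - 1"
    and gamma: "\<gamma> = (\<Sum>j=1..r. \<sigma> j)"
    and smooth: "\<gamma> \<ge> 2 \<Longrightarrow> C_k (\<gamma> - 2) h"
    and abscont: "\<gamma> \<ge> 2 \<Longrightarrow> abs_continuous_real ((deriv ^^ (\<gamma> - 2)) h)"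
    and antiper: "\<And>x. h (x + 1) = - h x"
    and repr: "\<And>x. 0 \<le> x \<Longrightarrow> x < 1 \<Longrightarrow> h x = (\<Sum>j=1..r. poly (q j) x * exp (\<eta> j * x))"
  shows "\<exists>x0::real. \<forall>k::int.
           mono_on {x0 + of_int k ..< x0 + of_int k + 1} h \<or>
           antimono_on {x0 + of_int k ..< x0 + of_int k + 1} h"
proof -
  define f where "f = exp_poly q \<eta> {1..r}"
  define ls where "ls = root_list \<sigma> \<eta> r"
  have f: "smooth f" "fold diff_op ls f = (\<lambda>_. 0)"
    using smooth_exp_poly fold_diff_op_root_list_exp_poly[of r q \<sigma> \<eta>] sigma_pos deg
    by (force simp: f_def ls_def)+
  have h_f: "h x = f x" if "0 \<le> x" "x < 1" for x
    using repr[OF that] by (simp add: f_def exp_poly_def)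
  have "antiperiodic_bc (\<gamma> - 1) f"
  proof (cases "\<gamma> \<ge> 2")
    case True
    then have "Suc (\<gamma> - 2) = \<gamma> - 1" by simp
    then show ?thesis using antiperiodic_bc_if_C_k[OF smooth[OF True] antiper f(1) h_f] by simp
  qed (simp add: antiperiodic_bc_def)
  moreover have "length ls = \<gamma>" by (simp add: ls_def gamma length_root_list)
  ultimately obtain t where "0 \<le> t" "t \<le> 1" "t = 0 \<or> f 1 = - f 0"
    "antimono_on {0..t} f \<and> mono_on {t..1} f \<or> mono_on {0..t} f \<and> antimono_on {t..1} f"
    using fold_diff_op_piecewise_monotone[OF f] by auto
  then have "mono_on {t..<t+1} h \<or> antimono_on {t..<t+1} h"
    using antiperiodic_monotone_on_from_unimodal h_f antiper by blast
  then show ?thesis using antiperiodic_monotone_on_translate[where h = h, OF antiper] by blast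
qed

end
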